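(* Let $f\in\mathbb{R}[X_1,\dots,X_n]$ be a form of degree $2d$. If $$f_{2d,i}\ge \sum_{\alpha\in\Delta,\ \alpha_i\ne 0}\alpha_i\left(\frac{|f_{\alpha}|}{2d}\right)^{2d/(\alpha_in_{\alpha})}\quad\text{for } i=1,\dots,n,$$ where $n_{\alpha}:=|\{i:\alpha_i\neq0\}|$, then $f$ is SOBS.
   Context: For $\alpha\in\mathbb{N}^n$ write $\underline{X}^\alpha=X_1^{\alpha_1}\cdots X_n^{\alpha_n}$. For $f=\sum_\alpha f_\alpha\underline{X}^\alpha$ of degree $2d$, $f_{2d,i}$ denotes the coefficient of $X_i^{2d}$, $\Omega=\{\alpha: f_\alpha\ne0\}\setminus\{\underline{0},2d\epsilon_1,\dots,2d\epsilon_n\}$ ($\epsilon_i$ the standard unit vectors), and $\Delta=\{\alpha\in\Omega:\ f_\alpha<0\text{ or }\alpha_i\text{ odd for some }i\}$. SOBS means a finite sum of squares of polynomials of the form $a\underline{X}^\alpha-b\underline{X}^\beta$, $a,b\in\mathbb{R}$. *)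

theory Defs
  imports Complex_Main "HOL-Library.Poly_Mapping"
begin

text \<open>The n variables X_1..X_n of the paper are indexed 0..n-1 here.\<close>

type_synonym mpoly = "(nat \<Rightarrow>\<^sub>0 nat) \<Rightarrow>\<^sub>0 real"

definition monom :: "(nat \<Rightarrow>\<^sub>0 nat) \<Rightarrow> real \<Rightarrow> mpoly" where
  "monom \<alpha> c = Poly_Mapping.single \<alpha> c"

definition deg_mon :: "(nat \<Rightarrow>\<^sub>0 nat) \<Rightarrow> nat" where
  "deg_mon \<alpha> = (\<Sum>i\<in>Poly_Mapping.keys \<alpha>. Poly_Mapping.lookup \<alpha> i)"

definition is_form :: "nat \<Rightarrow> nat \<Rightarrow> mpoly \<Rightarrow> bool" where
  "is_form n k f \<longleftrightarrow> (\<forall>\<alpha>\<in>Poly_Mapping.keys f. Poly_Mapping.keys \<alpha> \<subseteq> {..<n} \<and> deg_mon \<alpha> = k)"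

definition Omega :: "nat \<Rightarrow> nat \<Rightarrow> mpoly \<Rightarrow> (nat \<Rightarrow>\<^sub>0 nat) set" where
  "Omega n d f = Poly_Mapping.keys f - ({0} \<union> {Poly_Mapping.single i (2*d) | i. i < n})"

definition Delta :: "nat \<Rightarrow> nat \<Rightarrow> mpoly \<Rightarrow> (nat \<Rightarrow>\<^sub>0 nat) set" where
  "Delta n d f = {\<alpha> \<in> Omega n d f. Poly_Mapping.lookup f \<alpha> < 0 \<or> (\<exists>i. odd (Poly_Mapping.lookup \<alpha> i))}"

definition SOBS :: "nat \<Rightarrow> mpoly \<Rightarrow> bool" where
  "SOBS n f \<longleftrightarrow> (\<exists>L :: (real \<times> real \<times> (nat \<Rightarrow>\<^sub>0 nat) \<times> (nat \<Rightarrow>\<^sub>0 nat)) list.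
     (\<forall>(a,b,\<alpha>,\<beta>)\<in>set L. Poly_Mapping.keys \<alpha> \<subseteq> {..<n} \<and> Poly_Mapping.keys \<beta> \<subseteq> {..<n}) \<and>
     f = sum_list (map (\<lambda>(a,b,\<alpha>,\<beta>). (monom \<alpha> a - monom \<beta> b) * (monom \<alpha> a - monom \<beta> b)) L))"

end

theory Submission
  imports Defs
begin

text \<open>
  Everything rests on Hurwitz's AM-GM identity: for monomials \<open>P\<^sub>1, \<dots>, P\<^sub>2\<^sub>d\<close> and
  \<open>\<sigma> = \<plusminus>1\<close>, the polynomial \<open>\<Sum> P\<^sub>j\<^sup>2\<^sup>d + 2d\<sigma> P\<^sub>1\<cdots>P\<^sub>2\<^sub>d\<close> is a nonnegative combination of
  squares of binomials. Taking \<open>\<alpha>\<^sub>i\<close> copies of \<open>t\<^sub>i X\<^sub>i\<close> with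
  \<open>t\<^sub>i\<^sup>2\<^sup>d = (|f\<^sub>\<alpha>|/2d)\<^bsup>2d/(\<alpha>\<^sub>i n\<^sub>\<alpha>)\<^esup>\<close>, so that \<open>\<Prod> t\<^sub>i\<^bsup>\<alpha>\<^sub>i\<^esup> = |f\<^sub>\<alpha>|/2d\<close>, shows that
  \<open>\<Sum>\<^sub>i \<alpha>\<^sub>i t\<^sub>i\<^sup>2\<^sup>d X\<^sub>i\<^sup>2\<^sup>d + f\<^sub>\<alpha> X\<^sup>\<alpha>\<close> is SOBS for every \<open>\<alpha> \<in> \<Delta>\<close>. The hypothesis says that the
  diagonal coefficients \<open>f\<^sub>2\<^sub>d\<^sub>,\<^sub>i\<close> pay for all of these at once; what is left of the diagonal
  has nonnegative coefficients, and the terms of \<open>\<Omega> - \<Delta>\<close> are even monomials with positive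
  coefficients, hence squares.
\<close>

subsection \<open>Monomials and sums of binomial squares\<close>

definition is_monom :: "nat \<Rightarrow> mpoly \<Rightarrow> bool" where
  "is_monom n P \<longleftrightarrow> (\<exists>e c. Poly_Mapping.keys e \<subseteq> {..<n} \<and> P = monom e c)"

lemma monom_mult: "monom e a * monom e' b = monom (e + e') (a * b)"
  by (simp add: monom_def mult_single)

lemma monom_add: "monom e a + monom e b = monom e (a + b)"
  by (simp add: monom_def single_add)

lemma monom_zero [simp]: "monom e 0 = 0"
  by (simp add: monom_def)

lemma monom_zero_one: "monom 0 1 = 1"
  by (simp add: monom_def)

lemma monom_uminus: "- monom e a = monom e (- a)"
  by (simp add: monom_def single_uminus)

lemma of_nat_eq_monom: "(of_nat k :: mpoly) = monom 0 (real k)"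
  by (simp add: monom_def)

lemma monom_sum: "finite A \<Longrightarrow> (\<Sum>x\<in>A. monom e (g x)) = monom e (\<Sum>x\<in>A. g x)"
  by (induction A rule: finite_induct) (auto simp: monom_add)

lemma monom_prod:
  "finite A \<Longrightarrow> (\<Prod>x\<in>A. monom (e x) (g x)) = monom (\<Sum>x\<in>A. e x) (\<Prod>x\<in>A. g x)"
  by (induction A rule: finite_induct) (auto simp: monom_mult, simp add: monom_def)

lemma monom_single_power:
  "monom (Poly_Mapping.single i a) c ^ k = monom (Poly_Mapping.single i (k * a)) (c ^ k)"
  by (induction k) (auto simp: monom_mult single_add[symmetric], simp add: monom_def)

lemma is_monom_mult: "is_monom n P \<Longrightarrow> is_monom n Q \<Longrightarrow> is_monom n (P * Q)"
  unfolding is_monom_def using keys_add by (fastforce simp: monom_mult)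

lemma is_monom_one: "is_monom n 1"
  unfolding is_monom_def by (rule exI[of _ 0], rule exI[of _ 1]) (simp add: monom_def)

lemma is_monom_power: "is_monom n P \<Longrightarrow> is_monom n (P ^ k)"
  by (induction k) (auto simp: is_monom_one is_monom_mult)

lemma is_monom_prod_list: "\<forall>P\<in>set Ps. is_monom n P \<Longrightarrow> is_monom n (prod_list Ps)"
  by (induction Ps) (auto intro: is_monom_mult is_monom_one)

lemma is_monom_uminus: "is_monom n P \<Longrightarrow> is_monom n (- P)"
  unfolding is_monom_def by (metis monom_uminus)

lemma is_monom_const: "is_monom n (monom 0 c)"
  unfolding is_monom_def by (rule exI[of _ 0]) auto

lemma SOBS_zero: "SOBS n 0"
  unfolding SOBS_def by (rule exI[of _ "[]"]) simp

lemma SOBS_add: "SOBS n p \<Longrightarrow> SOBS n q \<Longrightarrow> SOBS n (p + q)"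
  unfolding SOBS_def
  apply (elim exE conjE)
  subgoal for L M by (rule exI[of _ "L @ M"]) auto
  done

lemma SOBS_sum: "finite A \<Longrightarrow> (\<And>x. x \<in> A \<Longrightarrow> SOBS n (g x)) \<Longrightarrow> SOBS n (\<Sum>x\<in>A. g x)"
  by (induction A rule: finite_induct) (auto simp: SOBS_zero SOBS_add)

lemma SOBS_sum_list: "(\<And>x. x \<in> set xs \<Longrightarrow> SOBS n (g x)) \<Longrightarrow> SOBS n (sum_list (map g xs))"
  by (induction xs) (auto simp: SOBS_zero SOBS_add)

lemma SOBS_binomial_square: "is_monom n P \<Longrightarrow> is_monom n Q \<Longrightarrow> SOBS n ((P - Q) * (P - Q))"
  unfolding SOBS_def is_monom_def
  apply (elim exE conjE)
  subgoal for e e' a b by (rule exI[of _ "[(a, b, e, e')]"]) auto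
  done

lemma SOBS_square_mult:
  assumes "is_monom n P" "SOBS n p"
  shows "SOBS n (P * P * p)"
proof -
  obtain w c where w: "Poly_Mapping.keys w \<subseteq> {..<n}" "P = monom w c"
    using assms(1) is_monom_def by auto
  obtain L where L: "\<forall>(a, b, \<alpha>, \<beta>)\<in>set L. Poly_Mapping.keys \<alpha> \<subseteq> {..<n} \<and> Poly_Mapping.keys \<beta> \<subseteq> {..<n}"
    "p = sum_list (map (\<lambda>(a, b, \<alpha>, \<beta>). (monom \<alpha> a - monom \<beta> b) * (monom \<alpha> a - monom \<beta> b)) L)"
    using assms(2) SOBS_def by auto
  define L' where "L' = map (\<lambda>(a, b, \<alpha>, \<beta>). (c * a, c * b, w + \<alpha>, w + \<beta>)) L"
  have "P * P * p = sum_list (map (\<lambda>x. P * P * (case x of (a, b, \<alpha>, \<beta>) \<Rightarrow>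
      (monom \<alpha> a - monom \<beta> b) * (monom \<alpha> a - monom \<beta> b))) L)"
    unfolding L(2) by (simp add: sum_list_const_mult o_def)
  also have "\<dots> = sum_list (map (\<lambda>(a, b, \<alpha>, \<beta>). (monom \<alpha> a - monom \<beta> b) * (monom \<alpha> a - monom \<beta> b)) L')"
    unfolding L'_def
    by (auto simp: o_def w(2) algebra_simps monom_mult intro!: arg_cong[where f=sum_list] map_cong)
  finally have "P * P * p = sum_list (map (\<lambda>(a, b, \<alpha>, \<beta>). (monom \<alpha> a - monom \<beta> b) * (monom \<alpha> a - monom \<beta> b)) L')" .
  moreover have "\<forall>(a, b, \<alpha>, \<beta>)\<in>set L'. Poly_Mapping.keys \<alpha> \<subseteq> {..<n} \<and> Poly_Mapping.keys \<beta> \<subseteq> {..<n}"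
    using L(1) w(1) keys_add unfolding L'_def by fastforce
  ultimately show ?thesis unfolding SOBS_def by blast
qed

lemma SOBS_const_mult:
  assumes "c \<ge> 0" "SOBS n p"
  shows "SOBS n (monom 0 c * p)"
proof -
  have "monom 0 c = monom 0 (sqrt c) * monom 0 (sqrt c)"
    using assms(1) by (simp add: monom_mult)
  then show ?thesis using SOBS_square_mult[OF is_monom_const assms(2)] by simp
qed

lemma SOBS_of_nat_mult_cancel:
  assumes "k > 0" "SOBS n (of_nat k * p)"
  shows "SOBS n p"
proof -
  have "SOBS n (monom 0 (1 / real k) * (of_nat k * p))"
    using assms by (intro SOBS_const_mult) auto
  moreover have "monom 0 (1 / real k) * (of_nat k * p) = p"
    using assms(1) by (simp add: of_nat_eq_monom mult.assoc[symmetric] monom_mult monom_zero_one)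
  ultimately show ?thesis by (simp only:)
qed

lemma SOBS_monom_double:
  assumes "c \<ge> 0" "Poly_Mapping.keys \<gamma> \<subseteq> {..<n}"
  shows "SOBS n (monom (\<gamma> + \<gamma>) c)"
proof -
  have "SOBS n (monom 0 c * ((monom \<gamma> 1 - monom 0 0) * (monom \<gamma> 1 - monom 0 0)))"
    using assms by (intro SOBS_const_mult SOBS_binomial_square is_monom_const) (auto simp: is_monom_def)
  then show ?thesis by (simp add: monom_mult)
qed

subsection \<open>Hurwitz's AM-GM inequality\<close>

lemma two_term_amgm_identity:
  fixes A B :: "'a::comm_ring_1"
  shows "of_nat m * A ^ (m + 1) + B ^ (m + 1) - of_nat (m + 1) * A ^ m * B
         = (A - B) * (A - B) * (\<Sum>j<m. of_nat (j + 1) * A ^ j * B ^ (m - 1 - j))"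
proof (induction m)
  case 0
  then show ?case by simp
next
  case (Suc m)
  have "(\<Sum>j<m. of_nat (j + 1) * A ^ j * B ^ (Suc m - 1 - j))
      = B * (\<Sum>j<m. of_nat (j + 1) * A ^ j * B ^ (m - 1 - j))"
    unfolding sum_distrib_left
  proof (rule sum.cong)
    fix j assume "j \<in> {..<m}"
    then have "Suc m - 1 - j = Suc (m - 1 - j)" by auto
    then show "of_nat (j + 1) * A ^ j * B ^ (Suc m - 1 - j) = B * (of_nat (j + 1) * A ^ j * B ^ (m - 1 - j))"
      by (simp add: algebra_simps)
  qed simp
  then have "(A - B) * (A - B) * (\<Sum>j<Suc m. of_nat (j + 1) * A ^ j * B ^ (Suc m - 1 - j))
      = B * ((A - B) * (A - B) * (\<Sum>j<m. of_nat (j + 1) * A ^ j * B ^ (m - 1 - j)))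
        + of_nat (m + 1) * A ^ m * (A - B) * (A - B)"
    by (simp add: algebra_simps)
  also have "\<dots> = B * (of_nat m * A ^ (m + 1) + B ^ (m + 1) - of_nat (m + 1) * A ^ m * B)
        + of_nat (m + 1) * A ^ m * (A - B) * (A - B)"
    using Suc by simp
  also have "\<dots> = of_nat (Suc m) * A ^ (Suc m + 1) + B ^ (Suc m + 1) - of_nat (Suc m + 1) * A ^ Suc m * B"
    by (simp add: algebra_simps)
  finally show ?case by simp
qed

lemma SOBS_two_term_amgm:
  assumes P: "is_monom n P" and Q: "is_monom n Q"
  shows "SOBS n (of_nat m * (P * P) ^ (m + 1) + (Q * Q) ^ (m + 1) - of_nat (m + 1) * (P * P) ^ m * (Q * Q))"
proof -
  have "of_nat m * (P * P) ^ (m + 1) + (Q * Q) ^ (m + 1) - of_nat (m + 1) * (P * P) ^ m * (Q * Q)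
    = (\<Sum>j<m. monom 0 (real (j + 1)) * ((P ^ (j + 2) * Q ^ (m - 1 - j) - P ^ j * Q ^ (m + 1 - j))
          * (P ^ (j + 2) * Q ^ (m - 1 - j) - P ^ j * Q ^ (m + 1 - j))))"
    unfolding two_term_amgm_identity sum_distrib_left
  proof (rule sum.cong)
    fix j assume "j \<in> {..<m}"
    then have e: "m + 1 - j = (m - 1 - j) + 2" by auto
    show "(P * P - Q * Q) * (P * P - Q * Q) * (of_nat (j + 1) * (P * P) ^ j * (Q * Q) ^ (m - 1 - j))
      = monom 0 (real (j + 1)) * ((P ^ (j + 2) * Q ^ (m - 1 - j) - P ^ j * Q ^ (m + 1 - j))
          * (P ^ (j + 2) * Q ^ (m - 1 - j) - P ^ j * Q ^ (m + 1 - j)))"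
      unfolding e of_nat_eq_monom[symmetric]
      by (simp add: algebra_simps power_add power_mult_distrib power2_eq_square)
  qed simp
  also have "SOBS n \<dots>"
    by (intro SOBS_sum SOBS_const_mult SOBS_binomial_square is_monom_mult is_monom_power P Q) auto
  finally show ?thesis .
qed

lemma amgm_step_identity:
  fixes b :: "'a::comm_ring_1"
  assumes "length xs = k"
  shows "of_nat k * (sum_list (map (\<lambda>x. x ^ (k + 1)) xs) + b ^ (k + 1) - of_nat (k + 1) * (b * prod_list xs))
    = sum_list (map (\<lambda>x. of_nat k * x ^ (k + 1) + b ^ (k + 1) - of_nat (k + 1) * x ^ k * b) xs)
      + of_nat (k + 1) * (b * (sum_list (map (\<lambda>x. x ^ k) xs) - of_nat k * prod_list xs))"
  using assms
  by (simp add: sum_list_addf sum_list_subtractf sum_list_const_mult sum_list_mult_const sum_list_triv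
      algebra_simps) (simp add: sum_list_const_mult[symmetric] mult.left_commute)

text \<open>Induction on the number of monomials: the identity above exhibits \<open>k\<close> times the new
  difference as a sum of two-term instances plus a square times the old difference.\<close>

lemma SOBS_amgm:
  assumes "\<forall>P\<in>set Ps. is_monom n P"
  shows "SOBS n (sum_list (map (\<lambda>P. (P * P) ^ length Ps) Ps)
                 - of_nat (length Ps) * prod_list (map (\<lambda>P. P * P) Ps))"
  using assms
proof (induction Ps)
  case Nil
  then show ?case by (simp add: SOBS_zero)
next
  case (Cons P Qs)
  define k where "k = length Qs"
  show ?case
  proof (cases "k = 0")
    case True
    then show ?thesis by (simp add: k_def SOBS_zero)
  next
    case False
    let ?T = "sum_list (map (\<lambda>Q. (Q * Q) ^ (k + 1)) Qs) + (P * P) ^ (k + 1)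
              - of_nat (k + 1) * (P * P * prod_list (map (\<lambda>Q. Q * Q) Qs))"
    have "of_nat k * ?T
      = sum_list (map (\<lambda>Q. of_nat k * (Q * Q) ^ (k + 1) + (P * P) ^ (k + 1)
                             - of_nat (k + 1) * (Q * Q) ^ k * (P * P)) Qs)
        + of_nat (k + 1) * (P * P * (sum_list (map (\<lambda>Q. (Q * Q) ^ k) Qs)
                                      - of_nat k * prod_list (map (\<lambda>Q. Q * Q) Qs)))"
      using amgm_step_identity[of "map (\<lambda>Q. Q * Q) Qs" k "P * P"] by (simp add: k_def map_map o_def)
    also have "SOBS n \<dots>"
    proof (rule SOBS_add)
      show "SOBS n (sum_list (map (\<lambda>Q. of_nat k * (Q * Q) ^ (k + 1) + (P * P) ^ (k + 1)
                             - of_nat (k + 1) * (Q * Q) ^ k * (P * P)) Qs))"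
        using Cons.prems by (intro SOBS_sum_list SOBS_two_term_amgm) auto
      show "SOBS n (of_nat (k + 1) * (P * P * (sum_list (map (\<lambda>Q. (Q * Q) ^ k) Qs)
                                      - of_nat k * prod_list (map (\<lambda>Q. Q * Q) Qs))))"
        using Cons unfolding k_def of_nat_eq_monom[of "length Qs + 1"]
        by (intro SOBS_const_mult SOBS_square_mult) auto
    qed
    finally have "SOBS n ?T"
      by (rule SOBS_of_nat_mult_cancel[rotated]) (use False in simp)
    moreover have "sum_list (map (\<lambda>Q. (Q * Q) ^ length (P # Qs)) (P # Qs))
        - of_nat (length (P # Qs)) * prod_list (map (\<lambda>Q. Q * Q) (P # Qs)) = ?T"
      by (simp add: k_def)
    ultimately show ?thesis by simp
  qed
qed

lemma prod_list_map_square: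
  "prod_list (map (\<lambda>x. x * x) xs) = prod_list xs * prod_list (xs :: 'a::comm_monoid_mult list)"
  by (induction xs) (auto simp: algebra_simps)

text \<open>Hurwitz's trick: AM-GM applied separately to the two halves, plus
  \<open>d (U + \<sigma> V)\<^sup>2\<close> for the two half products \<open>U\<close>, \<open>V\<close>.\<close>

lemma SOBS_hurwitz:
  assumes "\<forall>P\<in>set xs. is_monom n P" "\<forall>P\<in>set ys. is_monom n P" "length xs = d" "length ys = d"
    and \<sigma>: "\<sigma> * \<sigma> = 1"
  shows "SOBS n (sum_list (map (\<lambda>P. P ^ (2 * d)) (xs @ ys)) + monom 0 (\<sigma> * real (2 * d)) * prod_list (xs @ ys))"
proof -
  define U where "U = prod_list xs"
  define V where "V = prod_list ys"
  define S where "S = monom 0 \<sigma>"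
  have SS: "S * S = 1" unfolding S_def using \<sigma> by (simp add: monom_mult monom_zero_one)
  have A: "SOBS n (sum_list (map (\<lambda>P. (P * P) ^ d) xs) - of_nat d * (U * U))"
    using SOBS_amgm[of xs n] assms unfolding U_def by (simp add: prod_list_map_square)
  have B: "SOBS n (sum_list (map (\<lambda>P. (P * P) ^ d) ys) - of_nat d * (V * V))"
    using SOBS_amgm[of ys n] assms unfolding V_def by (simp add: prod_list_map_square)
  have C: "SOBS n (of_nat d * ((U - - (S * V)) * (U - - (S * V))))"
    unfolding of_nat_eq_monom U_def V_def S_def using assms(1,2)
    by (intro SOBS_const_mult SOBS_binomial_square is_monom_prod_list is_monom_uminus is_monom_mult
        is_monom_const) auto
  have "sum_list (map (\<lambda>P. P ^ (2 * d)) (xs @ ys)) + monom 0 (\<sigma> * real (2 * d)) * prod_list (xs @ ys)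
    = (sum_list (map (\<lambda>P. (P * P) ^ d) xs) - of_nat d * (U * U))
      + (sum_list (map (\<lambda>P. (P * P) ^ d) ys) - of_nat d * (V * V))
      + of_nat d * ((U - - (S * V)) * (U - - (S * V)))"
  proof -
    have "monom 0 (\<sigma> * real (2 * d)) = S * of_nat 2 * of_nat d"
      unfolding S_def of_nat_eq_monom by (simp add: monom_mult mult.assoc)
    moreover have "prod_list (xs @ ys) = U * V" unfolding U_def V_def by simp
    moreover have "(\<lambda>P::mpoly. P ^ (2 * d)) = (\<lambda>P. (P * P) ^ d)"
      by (simp add: power_mult power2_eq_square)
    ultimately show ?thesis
      using SS by (simp add: algebra_simps)
  qed
  then show ?thesis using SOBS_add[OF SOBS_add[OF A B] C] by simp
qed

subsection \<open>Absorbing the terms of \<open>\<Delta>\<close> into the diagonal\<close>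

definition variable_list :: "(nat \<Rightarrow>\<^sub>0 nat) \<Rightarrow> nat \<Rightarrow> nat list" where
  "variable_list \<alpha> m = concat (map (\<lambda>i. replicate (Poly_Mapping.lookup \<alpha> i) i) [0..<m])"

lemma sum_list_map_variable_list:
  "sum_list (map g (variable_list \<alpha> m)) = (\<Sum>i<m. of_nat (Poly_Mapping.lookup \<alpha> i) * (g i :: 'a::comm_ring_1))"
  by (induction m) (auto simp: variable_list_def sum_list_replicate)

lemma prod_list_map_variable_list:
  "prod_list (map g (variable_list \<alpha> m)) = (\<Prod>i<m. (g i :: 'a::comm_ring_1) ^ Poly_Mapping.lookup \<alpha> i)"
  by (induction m) (auto simp: variable_list_def)

lemma length_variable_list: "length (variable_list \<alpha> m) = (\<Sum>i<m. Poly_Mapping.lookup \<alpha> i)"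
  by (induction m) (auto simp: variable_list_def)

lemma set_variable_list_subset: "set (variable_list \<alpha> m) \<subseteq> {..<m}"
  by (auto simp: variable_list_def)

lemma sum_single_lookup:
  fixes \<alpha> :: "'a \<Rightarrow>\<^sub>0 'b::comm_monoid_add"
  assumes "Poly_Mapping.keys \<alpha> \<subseteq> A" "finite A"
  shows "(\<Sum>i\<in>A. Poly_Mapping.single i (Poly_Mapping.lookup \<alpha> i)) = \<alpha>"
proof (rule poly_mapping_eqI)
  fix k
  have "Poly_Mapping.lookup (\<Sum>i\<in>A. Poly_Mapping.single i (Poly_Mapping.lookup \<alpha> i)) k
      = (\<Sum>i\<in>A. if i = k then Poly_Mapping.lookup \<alpha> i else 0)"
    by (simp add: lookup_sum lookup_single when_def)
  also have "\<dots> = Poly_Mapping.lookup \<alpha> k"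
    using assms by (auto simp: sum.delta' in_keys_iff)
  finally show "Poly_Mapping.lookup (\<Sum>i\<in>A. Poly_Mapping.single i (Poly_Mapping.lookup \<alpha> i)) k
      = Poly_Mapping.lookup \<alpha> k" .
qed

lemma deg_mon_eq_sum_lessThan:
  "Poly_Mapping.keys \<alpha> \<subseteq> {..<n} \<Longrightarrow> deg_mon \<alpha> = (\<Sum>i<n. Poly_Mapping.lookup \<alpha> i)"
  unfolding deg_mon_def by (rule sum.mono_neutral_left) (auto simp: in_keys_iff)

text \<open>Hurwitz's inequality applied to \<open>\<alpha>\<^sub>i\<close> copies of \<open>t\<^sub>i X\<^sub>i\<close> for each \<open>i\<close>.\<close>

lemma SOBS_diagonal_plus_monom:
  assumes keys: "Poly_Mapping.keys \<alpha> \<subseteq> {..<n}" and deg: "deg_mon \<alpha> = 2 * d" and \<sigma>: "\<sigma> * \<sigma> = 1"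
  shows "SOBS n ((\<Sum>i<n. monom (Poly_Mapping.single i (2 * d)) (real (Poly_Mapping.lookup \<alpha> i) * t i ^ (2 * d)))
            + monom \<alpha> (\<sigma> * real (2 * d) * (\<Prod>i<n. t i ^ Poly_Mapping.lookup \<alpha> i)))"
proof -
  define Ps where "Ps = map (\<lambda>i. monom (Poly_Mapping.single i 1) (t i)) (variable_list \<alpha> n)"
  have len: "length Ps = 2 * d"
    unfolding Ps_def using length_variable_list deg deg_mon_eq_sum_lessThan[OF keys] by simp
  have "is_monom n (monom (Poly_Mapping.single i 1) c)" if "i < n" for i c
    unfolding is_monom_def using that by (intro exI[of _ "Poly_Mapping.single i 1"]) auto
  then have "\<forall>P\<in>set Ps. is_monom n P"
    using set_variable_list_subset[of \<alpha> n] unfolding Ps_def by auto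
  then have "SOBS n (sum_list (map (\<lambda>P. P ^ (2 * d)) (take d Ps @ drop d Ps))
                     + monom 0 (\<sigma> * real (2 * d)) * prod_list (take d Ps @ drop d Ps))"
    using len by (intro SOBS_hurwitz[OF _ _ _ _ \<sigma>]) (auto dest: in_set_takeD in_set_dropD)
  then have hurwitz: "SOBS n (sum_list (map (\<lambda>P. P ^ (2 * d)) Ps) + monom 0 (\<sigma> * real (2 * d)) * prod_list Ps)"
    by (simp only: append_take_drop_id)
  have "sum_list (map (\<lambda>P. P ^ (2 * d)) Ps)
      = (\<Sum>i<n. monom (Poly_Mapping.single i (2 * d)) (real (Poly_Mapping.lookup \<alpha> i) * t i ^ (2 * d)))"
    unfolding Ps_def map_map o_def sum_list_map_variable_list monom_single_power of_nat_eq_monom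
    by (simp add: monom_mult)
  moreover have "monom 0 (\<sigma> * real (2 * d)) * prod_list Ps
      = monom \<alpha> (\<sigma> * real (2 * d) * (\<Prod>i<n. t i ^ Poly_Mapping.lookup \<alpha> i))"
    unfolding Ps_def prod_list_map_variable_list monom_single_power monom_prod[OF finite_lessThan]
    using sum_single_lookup[OF keys] by (simp add: monom_mult)
  ultimately show ?thesis using hurwitz by (simp only:)
qed

text \<open>The share of the diagonal coefficient \<open>f\<^sub>2\<^sub>d\<^sub>,\<^sub>i\<close> that is spent on the term \<open>a X\<^sup>\<beta>\<close>; its sum
  over \<open>\<beta> \<in> \<Delta>\<close> is the right-hand side of the hypothesis of the theorem.\<close>

definition cover_coeff :: "nat \<Rightarrow> (nat \<Rightarrow>\<^sub>0 nat) \<Rightarrow> real \<Rightarrow> nat \<Rightarrow> real" where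
  "cover_coeff d \<beta> a i =
     (if Poly_Mapping.lookup \<beta> i \<noteq> 0
      then real (Poly_Mapping.lookup \<beta> i) * (\<bar>a\<bar> / real (2 * d))
             powr (real (2 * d) / (real (Poly_Mapping.lookup \<beta> i) * real (card (Poly_Mapping.keys \<beta>))))
      else 0)"

lemma SOBS_cover_coeff_plus_monom:
  assumes keys: "Poly_Mapping.keys \<beta> \<subseteq> {..<n}" and deg: "deg_mon \<beta> = 2 * d"
    and "d \<ge> 1" and "a \<noteq> 0"
  shows "SOBS n ((\<Sum>i<n. monom (Poly_Mapping.single i (2 * d)) (cover_coeff d \<beta> a i)) + monom \<beta> a)"
proof -
  define x where "x = \<bar>a\<bar> / real (2 * d)"
  define N where "N = card (Poly_Mapping.keys \<beta>)"
  define t where "t i = (if Poly_Mapping.lookup \<beta> i \<noteq> 0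
                         then x powr (1 / (real (Poly_Mapping.lookup \<beta> i) * real N)) else 1)" for i
  have x: "x > 0" unfolding x_def using assms by auto
  have "Poly_Mapping.keys \<beta> \<noteq> {}"
    using deg assms(3) unfolding deg_mon_def by auto
  then have N: "N \<ge> 1" unfolding N_def by (simp add: Suc_le_eq card_gt_0_iff)
  have coeff: "real (Poly_Mapping.lookup \<beta> i) * t i ^ (2 * d) = cover_coeff d \<beta> a i" for i
    unfolding t_def cover_coeff_def x_def[symmetric] N_def[symmetric]
    using x by (auto simp: powr_power)
  have "(\<Prod>i<n. t i ^ Poly_Mapping.lookup \<beta> i) = (\<Prod>i\<in>Poly_Mapping.keys \<beta>. t i ^ Poly_Mapping.lookup \<beta> i)"
    using keys by (intro prod.mono_neutral_right) (auto simp: in_keys_iff)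
  also have "\<dots> = (\<Prod>i\<in>Poly_Mapping.keys \<beta>. x powr (1 / real N))"
    using x by (intro prod.cong) (auto simp: t_def in_keys_iff powr_power)
  also have "\<dots> = (x powr (1 / real N)) ^ N" by (simp add: N_def)
  also have "\<dots> = x" using x N by (simp add: powr_power)
  finally have prod: "(\<Prod>i<n. t i ^ Poly_Mapping.lookup \<beta> i) = x" .
  have sign: "sgn a * real (2 * d) * x = a"
    unfolding x_def using assms(3) by (simp add: sgn_mult_abs)
  show ?thesis
    using SOBS_diagonal_plus_monom[OF keys deg, of "sgn a" t] assms(4)
    unfolding coeff prod sign by (simp add: sgn_if)
qed

lemma SOBS_monom_even_exponents:
  assumes "c \<ge> 0" "Poly_Mapping.keys \<beta> \<subseteq> {..<n}" "\<forall>i. even (Poly_Mapping.lookup \<beta> i)"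
  shows "SOBS n (monom \<beta> c)"
proof -
  define \<gamma> where "\<gamma> = Poly_Mapping.mapp (\<lambda>_ k. k div 2) \<beta>"
  have "Poly_Mapping.keys \<gamma> \<subseteq> {..<n}"
    using keys_mapp_subset assms(2) unfolding \<gamma>_def by (rule order_trans)
  then have "SOBS n (monom (\<gamma> + \<gamma>) c)"
    by (rule SOBS_monom_double[OF assms(1)])
  moreover have "\<gamma> + \<gamma> = \<beta>"
  proof (rule poly_mapping_eqI)
    fix k
    obtain b where "Poly_Mapping.lookup \<beta> k = 2 * b"
      using assms(3) by blast
    then show "Poly_Mapping.lookup (\<gamma> + \<gamma>) k = Poly_Mapping.lookup \<beta> k"
      by (simp add: \<gamma>_def lookup_add lookup_mapp when_def in_keys_iff)
  qed
  ultimately show ?thesis by simp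
qed

lemma poly_eq_sum_monom: "f = (\<Sum>\<beta>\<in>Poly_Mapping.keys f. monom \<beta> (Poly_Mapping.lookup f \<beta>))"
  unfolding monom_def by (rule sum_single_lookup[symmetric]) auto

lemma poly_split_diagonal:
  fixes f :: mpoly
  assumes "inj_on e I" "finite I" "D \<subseteq> Poly_Mapping.keys f - e ` I"
  shows "f = (\<Sum>i\<in>I. monom (e i) (Poly_Mapping.lookup f (e i) - (\<Sum>\<beta>\<in>D. c \<beta> i)))
           + (\<Sum>\<beta>\<in>D. (\<Sum>i\<in>I. monom (e i) (c \<beta> i)) + monom \<beta> (Poly_Mapping.lookup f \<beta>))
           + (\<Sum>\<beta>\<in>Poly_Mapping.keys f - e ` I - D. monom \<beta> (Poly_Mapping.lookup f \<beta>))"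
    (is "f = ?diag + ?moved + ?rest")
proof -
  let ?g = "\<lambda>\<beta>. monom \<beta> (Poly_Mapping.lookup f \<beta>)"
  let ?K = "Poly_Mapping.keys f"
  have "finite D" by (rule finite_subset[OF assms(3)]) simp
  have "sum ?g (?K \<inter> e ` I) = sum ?g (e ` I)"
    using assms(2) by (intro sum.mono_neutral_left) (auto simp: in_keys_iff)
  also have "\<dots> = (\<Sum>i\<in>I. monom (e i) (Poly_Mapping.lookup f (e i)))"
    using assms(1) by (simp add: sum.reindex)
  also have "\<dots> = ?diag + (\<Sum>i\<in>I. \<Sum>\<beta>\<in>D. monom (e i) (c \<beta> i))"
    using \<open>finite D\<close> by (simp add: monom_sum monom_add flip: sum.distrib)
  also have "(\<Sum>i\<in>I. \<Sum>\<beta>\<in>D. monom (e i) (c \<beta> i)) = (\<Sum>\<beta>\<in>D. \<Sum>i\<in>I. monom (e i) (c \<beta> i))"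
    by (rule sum.swap)
  finally have diag: "sum ?g (?K \<inter> e ` I) = ?diag + (\<Sum>\<beta>\<in>D. \<Sum>i\<in>I. monom (e i) (c \<beta> i))" .
  have rest: "sum ?g (?K - e ` I) = sum ?g D + ?rest"
    using assms(3) by (simp add: sum.subset_diff)
  have "f = sum ?g ?K"
    by (rule poly_eq_sum_monom)
  also have "\<dots> = sum ?g (?K \<inter> e ` I) + sum ?g (?K - e ` I)"
    by (rule sum.Int_Diff) simp
  also have "\<dots> = ?diag + ?moved + ?rest"
    unfolding diag rest sum.distrib by (simp only: add.assoc)
  finally show ?thesis .
qed

lemma finite_Delta: "finite (Delta n d f)"
  by (rule finite_subset[of _ "Poly_Mapping.keys f"]) (auto simp: Delta_def Omega_def)

lemma deg_mon_eq_0D: "deg_mon \<alpha> = 0 \<Longrightarrow> \<alpha> = 0"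
  unfolding deg_mon_def by (auto simp: in_keys_iff intro!: poly_mapping_eqI)

lemma SOBS_form_degree_zero:
  assumes "is_form n 0 f" "Poly_Mapping.lookup f 0 \<ge> 0"
  shows "SOBS n f"
proof -
  have "Poly_Mapping.keys f \<subseteq> {0}"
    using assms(1) deg_mon_eq_0D unfolding is_form_def by blast
  then have "f = monom 0 (Poly_Mapping.lookup f 0)"
    unfolding monom_def by (intro poly_mapping_eqI) (auto simp: lookup_single when_def in_keys_iff)
  moreover have "SOBS n (monom 0 (Poly_Mapping.lookup f 0))"
    by (rule SOBS_monom_even_exponents[OF assms(2)]) auto
  ultimately show ?thesis by metis
qed

lemma SOBS_if_diagonal_covers_Delta:
  assumes form: "is_form n (2 * d) f" and "d \<ge> 1"
    and covers: "\<forall>i<n. (\<Sum>\<beta>\<in>Delta n d f. cover_coeff d \<beta> (Poly_Mapping.lookup f \<beta>) i)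
                      \<le> Poly_Mapping.lookup f (Poly_Mapping.single i (2 * d))"
  shows "SOBS n f"
proof -
  define e where "e i = Poly_Mapping.single i (2 * d)" for i :: nat
  define c where "c \<beta> = cover_coeff d \<beta> (Poly_Mapping.lookup f \<beta>)" for \<beta>
  have keys: "Poly_Mapping.keys \<beta> \<subseteq> {..<n}" "deg_mon \<beta> = 2 * d" if "\<beta> \<in> Poly_Mapping.keys f" for \<beta>
    using form that unfolding is_form_def by auto
  have "inj_on e {..<n}"
  proof (rule inj_onI)
    fix i j assume "e i = e j"
    then have "Poly_Mapping.lookup (e i) i = Poly_Mapping.lookup (e j) i" by simp
    then show "i = j" using assms(2) by (auto simp: e_def lookup_single when_def split: if_splits)
  qed
  moreover have Omega: "Omega n d f = Poly_Mapping.keys f - e ` {..<n}"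
    using keys[of 0] assms(2) by (auto simp: Omega_def e_def deg_mon_def)
  moreover have "Delta n d f \<subseteq> Poly_Mapping.keys f - e ` {..<n}"
    unfolding Omega[symmetric] Delta_def by auto
  ultimately have split:
    "f = (\<Sum>i<n. monom (e i) (Poly_Mapping.lookup f (e i) - (\<Sum>\<beta>\<in>Delta n d f. c \<beta> i)))
       + (\<Sum>\<beta>\<in>Delta n d f. (\<Sum>i<n. monom (e i) (c \<beta> i)) + monom \<beta> (Poly_Mapping.lookup f \<beta>))
       + (\<Sum>\<beta>\<in>Omega n d f - Delta n d f. monom \<beta> (Poly_Mapping.lookup f \<beta>))"
    unfolding Omega by (intro poly_split_diagonal) auto
  have "SOBS n (monom (e i) (Poly_Mapping.lookup f (e i) - (\<Sum>\<beta>\<in>Delta n d f. c \<beta> i)))" if "i < n" for i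
    using covers that by (intro SOBS_monom_even_exponents) (auto simp: c_def e_def lookup_single when_def)
  moreover have "SOBS n ((\<Sum>i<n. monom (e i) (c \<beta> i)) + monom \<beta> (Poly_Mapping.lookup f \<beta>))"
    if "\<beta> \<in> Delta n d f" for \<beta>
    using that keys assms(2) unfolding c_def e_def
    by (intro SOBS_cover_coeff_plus_monom) (auto simp: Delta_def Omega_def in_keys_iff)
  moreover have "SOBS n (monom \<beta> (Poly_Mapping.lookup f \<beta>))" if "\<beta> \<in> Omega n d f - Delta n d f" for \<beta>
    using that keys by (intro SOBS_monom_even_exponents) (auto simp: Delta_def Omega_def)
  ultimately show ?thesis
    by (subst split) (intro SOBS_add[OF SOBS_add] SOBS_sum finite_lessThan finite_Delta; auto simp: Omega)
qed

theorem corollary2p9: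
  fixes n d :: nat and f :: mpoly
  assumes "n \<ge> 1"
    and "is_form n (2*d) f"
    and "\<forall>i<n. Poly_Mapping.lookup f (Poly_Mapping.single i (2*d)) \<ge>
           (\<Sum>\<alpha>\<in>{\<alpha>\<in>Delta n d f. Poly_Mapping.lookup \<alpha> i \<noteq> 0}.
              real (Poly_Mapping.lookup \<alpha> i) * (\<bar>Poly_Mapping.lookup f \<alpha>\<bar> / real (2*d))
                powr (real (2*d) / (real (Poly_Mapping.lookup \<alpha> i) * real (card (Poly_Mapping.keys \<alpha>)))))"
  shows "SOBS n f"
proof -
  have "(\<Sum>\<beta>\<in>Delta n d f. cover_coeff d \<beta> (Poly_Mapping.lookup f \<beta>) i)
      = (\<Sum>\<alpha>\<in>{\<alpha>\<in>Delta n d f. Poly_Mapping.lookup \<alpha> i \<noteq> 0}.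
              real (Poly_Mapping.lookup \<alpha> i) * (\<bar>Poly_Mapping.lookup f \<alpha>\<bar> / real (2*d))
                powr (real (2*d) / (real (Poly_Mapping.lookup \<alpha> i) * real (card (Poly_Mapping.keys \<alpha>)))))"
    for i
    unfolding cover_coeff_def by (rule sum.inter_filter[OF finite_Delta, symmetric])
  with assms(3) have covers:
    "\<forall>i<n. (\<Sum>\<beta>\<in>Delta n d f. cover_coeff d \<beta> (Poly_Mapping.lookup f \<beta>) i)
             \<le> Poly_Mapping.lookup f (Poly_Mapping.single i (2 * d))"
    by simp
  show ?thesis
  proof (cases "d = 0")
    case True
    then have "Delta n d f = {}"
      using assms(2) unfolding is_form_def deg_mon_def Delta_def Omega_def
      by (auto simp: in_keys_iff intro!: poly_mapping_eqI)
    with covers assms(1) True have "Poly_Mapping.lookup f 0 \<ge> 0"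
      by (auto dest: spec[of _ 0])
    with True show ?thesis
      using SOBS_form_degree_zero assms(2) by simp
  next
    case False
    then show ?thesis
      using SOBS_if_diagonal_covers_Delta assms(2) covers by simp
  qed
qed

end
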